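(* Let $A$ be a finite set, let $\overset{*}{<}=(\overset{x}{<},\overset{y}{<})$ be a regular double order on $A$ and let $\sigma\in\Sigma_A$. Then $\overset{*}{<}\bar\cup\,(\overset{*}{<}\sigma)$ is a double order if and only if $\sigma$ is the identity.
   Context: A strict partial order is a transitive irreflexive relation; it is semi-linear if it is induced by a surjection $h:A\to\{1,\dots,l\}$ (i.e. $a<b$ iff $h(a)<h(b)$). For strict partial orders $<_1,<_2$, $<_1\bar\cup<_2$ denotes the transitive closure of their union. A double order on $A$ is a pair $(\overset{x}{<},\overset{y}{<})$ of strict partial orders on $A$ such that for all $a\ne b$ at least one of $a\overset{x}{<}b$, $b\overset{x}{<}a$, $a\overset{y}{<}b$, $b\overset{y}{<}a$ holds. It is regular if $\overset{x}{<}$ is semi-linear and $a\overset{x}{<}b$ implies neither $a\overset{y}{<}b$ nor $b\overset{y}{<}a$. For double orders $\overset{*}{<}_1,\overset{*}{<}_2$, the union $\overset{*}{<}_1\bar\cup\overset{*}{<}_2=(\overset{x}{<}_1\bar\cup\overset{x}{<}_2,\overset{y}{<}_1\bar\cup\overset{y}{<}_2)$; it is a double order exactly when both components are irreflexive. $\Sigma_A$ acts on the right by $(\overset{x}{<},\overset{y}{<})\sigma=(\overset{x}{<}\sigma,\overset{y}{<}\sigma)$, where $a(\overset{x}{<}\sigma)b$ iff $\sigma(a)\overset{x}{<}\sigma(b)$, and similarly for $y$. *)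

theory Defs
  imports Main "HOL-Combinatorics.Permutations"
begin

definition strict_partial_order :: "'a set \<Rightarrow> 'a rel \<Rightarrow> bool" where
  "strict_partial_order A r \<longleftrightarrow> r \<subseteq> A \<times> A \<and> trans r \<and> irrefl r"

definition semi_linear :: "'a set \<Rightarrow> 'a rel \<Rightarrow> bool" where
  "semi_linear A r \<longleftrightarrow> r \<subseteq> A \<times> A \<and>
     (\<exists>(h::'a \<Rightarrow> nat) (l::nat). h ` A = {1..l} \<and>
        (\<forall>a\<in>A. \<forall>b\<in>A. (a, b) \<in> r \<longleftrightarrow> h a < h b))"

definition rel_union :: "'a rel \<Rightarrow> 'a rel \<Rightarrow> 'a rel" where
  "rel_union r1 r2 = (r1 \<union> r2)\<^sup>+"

definition double_order :: "'a set \<Rightarrow> 'a rel \<times> 'a rel \<Rightarrow> bool" where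
  "double_order A d \<longleftrightarrow> strict_partial_order A (fst d) \<and> strict_partial_order A (snd d) \<and>
     (\<forall>a\<in>A. \<forall>b\<in>A. a \<noteq> b \<longrightarrow>
        (a, b) \<in> fst d \<or> (b, a) \<in> fst d \<or> (a, b) \<in> snd d \<or> (b, a) \<in> snd d)"

definition regular_double_order :: "'a set \<Rightarrow> 'a rel \<times> 'a rel \<Rightarrow> bool" where
  "regular_double_order A d \<longleftrightarrow> double_order A d \<and> semi_linear A (fst d) \<and>
     (\<forall>a b. (a, b) \<in> fst d \<longrightarrow> (a, b) \<notin> snd d \<and> (b, a) \<notin> snd d)"

definition double_union :: "'a rel \<times> 'a rel \<Rightarrow> 'a rel \<times> 'a rel \<Rightarrow> 'a rel \<times> 'a rel" where
  "double_union d1 d2 = (rel_union (fst d1) (fst d2), rel_union (snd d1) (snd d2))"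

definition rel_act :: "'a set \<Rightarrow> 'a rel \<Rightarrow> ('a \<Rightarrow> 'a) \<Rightarrow> 'a rel" where
  "rel_act A r \<sigma> = {(a, b). a \<in> A \<and> b \<in> A \<and> (\<sigma> a, \<sigma> b) \<in> r}"

definition double_act :: "'a set \<Rightarrow> 'a rel \<times> 'a rel \<Rightarrow> ('a \<Rightarrow> 'a) \<Rightarrow> 'a rel \<times> 'a rel" where
  "double_act A d \<sigma> = (rel_act A (fst d) \<sigma>, rel_act A (snd d) \<sigma>)"

end

theory Submission
  imports Defs
begin

text \<open>
  A regular double order is a linear order in disguise: its x-component ranks the elements
  by a level function h, and its y-component linearly orders each level.  If the union of
  d and d\<sigma> is a double order, neither component of the union contains a 2-cycle, so \<sigma>
  reverses no x-pair and no y-pair.  Counting the elements up to a given level then shows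
  that \<sigma> preserves h, hence \<sigma> reverses no pair of the lexicographic linear order
  x \<union> y, and an order-preserving permutation of a finite linear order is the identity.
\<close>

lemma irrefl_rel_union_act_no_reversal:
  assumes "irrefl (rel_union R (rel_act A R \<sigma>))"
    and "a \<in> A" "b \<in> A" "(a, b) \<in> R"
  shows "(\<sigma> b, \<sigma> a) \<notin> R"
proof
  assume "(\<sigma> b, \<sigma> a) \<in> R"
  then have "(b, a) \<in> rel_act A R \<sigma>"
    using assms(2,3) by (simp add: rel_act_def)
  with assms(4) have "(a, a) \<in> (R \<union> rel_act A R \<sigma>)\<^sup>+"
    by (meson UnI1 UnI2 r_into_trancl trancl_into_trancl)
  with assms(1) show False
    by (simp add: rel_union_def irrefl_def)
qed

lemma permutes_image_Collect:
  assumes "\<sigma> permutes A"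
  shows "\<sigma> ` {a \<in> A. P (\<sigma> a)} = {a \<in> A. P a}"
proof -
  have "{a \<in> A. P (\<sigma> a)} = A \<inter> \<sigma> -` Collect P" by auto
  then have "\<sigma> ` {a \<in> A. P (\<sigma> a)} = \<sigma> ` A \<inter> \<sigma> ` \<sigma> -` Collect P"
    using permutes_inj[OF assms] by (simp add: image_Int)
  also have "\<dots> = A \<inter> Collect P"
    using assms by (metis permutes_image permutes_surj surj_image_vimage_eq)
  finally show ?thesis by auto
qed

lemma card_permutes_Collect:
  assumes "\<sigma> permutes A"
  shows "card {a \<in> A. P (\<sigma> a)} = card {a \<in> A. P a}"
proof -
  have "inj_on \<sigma> {a \<in> A. P (\<sigma> a)}"
    using assms by (rule permutes_inj_on)
  then have "card (\<sigma> ` {a \<in> A. P (\<sigma> a)}) = card {a \<in> A. P (\<sigma> a)}"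
    by (rule card_image)
  then show ?thesis
    by (simp add: permutes_image_Collect[OF assms])
qed

lemma permutes_preserves_monotone_levels:
  fixes f :: "'a \<Rightarrow> 'b::linorder"
  assumes "finite A" "\<sigma> permutes A"
    and mono: "\<And>a b. a \<in> A \<Longrightarrow> b \<in> A \<Longrightarrow> f a < f b \<Longrightarrow> f (\<sigma> a) \<le> f (\<sigma> b)"
    and "c \<in> A"
  shows "f (\<sigma> c) = f c"
proof -
  have sublevel_eq: "{a \<in> A. f a \<le> k} = {a \<in> A. f (\<sigma> a) \<le> k}" for k
  proof (rule ccontr)
    let ?S = "{a \<in> A. f a \<le> k}" and ?T = "{a \<in> A. f (\<sigma> a) \<le> k}"
    assume "?S \<noteq> ?T"
    moreover have "card ?T = card ?S"
      using card_permutes_Collect[OF assms(2)] .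
    moreover have "finite ?S" "finite ?T"
      using assms(1) by simp_all
    ultimately have "\<not> ?S \<subseteq> ?T" "\<not> ?T \<subseteq> ?S"
      by (metis card_subset_eq)+
    obtain a where a: "a \<in> A" "f a \<le> k" "k < f (\<sigma> a)"
      using \<open>\<not> ?S \<subseteq> ?T\<close> by (auto simp: subset_iff not_le)
    obtain b where b: "b \<in> A" "f (\<sigma> b) \<le> k" "k < f b"
      using \<open>\<not> ?T \<subseteq> ?S\<close> by (auto simp: subset_iff not_le)
    show False
      using mono[of a b] a b by (meson le_less_trans not_le order_trans)
  qed
  have "f (\<sigma> c) \<le> f c"
    using sublevel_eq[of "f c"] \<open>c \<in> A\<close> by blast
  moreover have "f c \<le> f (\<sigma> c)"
    using sublevel_eq[of "f (\<sigma> c)"] \<open>c \<in> A\<close> by blast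
  ultimately show ?thesis
    by (rule order_antisym)
qed

lemma permutes_strict_linear_order_no_reversal_id:
  assumes "finite A" "\<sigma> permutes A" and lin: "strict_linear_order_on A L"
    and no_reversal: "\<And>a b. a \<in> A \<Longrightarrow> b \<in> A \<Longrightarrow> (a, b) \<in> L \<Longrightarrow> (\<sigma> b, \<sigma> a) \<notin> L"
  shows "\<sigma> = id"
proof -
  have "trans L" "irrefl L" "total_on A L"
    using lin by (simp_all add: strict_linear_order_on_def)
  have \<sigma>A: "\<sigma> a \<in> A" if "a \<in> A" for a
    using assms(2) that by (simp add: permutes_in_image)
  have mono: "(\<sigma> a, \<sigma> b) \<in> L \<longleftrightarrow> (a, b) \<in> L" if "a \<in> A" "b \<in> A" for a b
  proof
    assume "(\<sigma> a, \<sigma> b) \<in> L"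
    then have "a \<noteq> b" "(b, a) \<notin> L"
      using \<open>irrefl L\<close> no_reversal that by (auto simp: irrefl_def)
    then show "(a, b) \<in> L"
      using \<open>total_on A L\<close> that by (auto simp: total_on_def)
  next
    assume "(a, b) \<in> L"
    then have "\<sigma> a \<noteq> \<sigma> b" "(\<sigma> b, \<sigma> a) \<notin> L"
      using \<open>irrefl L\<close> no_reversal that permutes_inj[OF assms(2)]
      by (auto simp: irrefl_def inj_eq)
    then show "(\<sigma> a, \<sigma> b) \<in> L"
      using \<open>total_on A L\<close> \<sigma>A that by (auto simp: total_on_def)
  qed
  define down where "down c = {b \<in> A. (b, c) \<in> L}" for c
  have card_down_\<sigma>: "card (down (\<sigma> c)) = card (down c)" if "c \<in> A" for c
  proof -
    have "{b \<in> A. (\<sigma> b, \<sigma> c) \<in> L} = down c"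
      using mono that by (auto simp: down_def)
    then show ?thesis
      using card_permutes_Collect[OF assms(2), of "\<lambda>b. (b, \<sigma> c) \<in> L"] by (simp add: down_def)
  qed
  have card_down_less: "card (down c) < card (down c')" if "(c, c') \<in> L" "c \<in> A" "c' \<in> A" for c c'
  proof (rule psubset_card_mono)
    show "finite (down c')"
      using assms(1) by (simp add: down_def)
    show "down c \<subset> down c'"
      using that \<open>irrefl L\<close> unfolding down_def
      by (auto simp: irrefl_def intro: transD[OF \<open>trans L\<close>])
  qed
  have "\<sigma> c = c" if "c \<in> A" for c
    using card_down_\<sigma>[OF that] card_down_less[of c "\<sigma> c"] card_down_less[of "\<sigma> c" c]
      \<open>total_on A L\<close> that \<sigma>A[OF that] by (auto simp: total_on_def)
  then show ?thesis
    using assms(2) by (metis eq_id_iff permutes_not_in)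
qed

lemma double_union_double_act_id:
  assumes "double_order A d"
  shows "double_union d (double_act A d id) = d"
proof -
  have "rel_union R (rel_act A R id) = R" if "strict_partial_order A R" for R
  proof -
    have "rel_act A R id = R"
      using that by (auto simp: strict_partial_order_def rel_act_def)
    then show ?thesis
      using that by (simp add: strict_partial_order_def rel_union_def)
  qed
  then show ?thesis
    using assms by (simp add: double_order_def double_union_def double_act_def)
qed

lemma regular_double_orderE:
  assumes "regular_double_order A (X, Y)"
  obtains h :: "'a \<Rightarrow> nat"
  where "\<And>a b. a \<in> A \<Longrightarrow> b \<in> A \<Longrightarrow> (a, b) \<in> X \<longleftrightarrow> h a < h b"
    and "\<And>a b. (a, b) \<in> Y \<Longrightarrow> h a = h b"
proof -
  obtain h :: "'a \<Rightarrow> nat" where level_X: "\<And>a b. a \<in> A \<Longrightarrow> b \<in> A \<Longrightarrow> (a, b) \<in> X \<longleftrightarrow> h a < h b"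
    using assms by (auto simp: regular_double_order_def semi_linear_def)
  moreover have "h a = h b" if "(a, b) \<in> Y" for a b
  proof -
    have "a \<in> A" "b \<in> A" "(a, b) \<notin> X" "(b, a) \<notin> X"
      using assms that by (auto simp: regular_double_order_def double_order_def strict_partial_order_def)
    then show ?thesis
      using level_X by (meson linorder_neqE_nat)
  qed
  ultimately show thesis
    using that by blast
qed

lemma regular_double_order_strict_linear_order:
  assumes "regular_double_order A (X, Y)"
  shows "strict_linear_order_on A (X \<union> Y)"
proof -
  obtain h :: "'a \<Rightarrow> nat" where level_X: "\<And>a b. a \<in> A \<Longrightarrow> b \<in> A \<Longrightarrow> (a, b) \<in> X \<longleftrightarrow> h a < h b"
    and level_Y: "\<And>a b. (a, b) \<in> Y \<Longrightarrow> h a = h b"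
    using regular_double_orderE[OF assms] by blast
  have X: "strict_partial_order A X" and Y: "strict_partial_order A Y"
    and total: "\<forall>a\<in>A. \<forall>b\<in>A. a \<noteq> b \<longrightarrow> (a, b) \<in> X \<or> (b, a) \<in> X \<or> (a, b) \<in> Y \<or> (b, a) \<in> Y"
    using assms by (simp_all add: regular_double_order_def double_order_def)
  have "trans (X \<union> Y)"
  proof (rule transI)
    fix a b c assume ab: "(a, b) \<in> X \<union> Y" and bc: "(b, c) \<in> X \<union> Y"
    then have "a \<in> A" "b \<in> A" "c \<in> A"
      using X Y by (auto simp: strict_partial_order_def)
    show "(a, c) \<in> X \<union> Y"
    proof (cases "(a, b) \<in> Y \<and> (b, c) \<in> Y")
      case True
      then show ?thesis
        using Y by (auto simp: strict_partial_order_def dest: transD)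
    next
      case False
      then have "h a < h c"
        using ab bc level_X level_Y \<open>a \<in> A\<close> \<open>b \<in> A\<close> \<open>c \<in> A\<close> by fastforce
      then show ?thesis
        using level_X \<open>a \<in> A\<close> \<open>c \<in> A\<close> by blast
    qed
  qed
  moreover have "irrefl (X \<union> Y)"
    using X Y by (simp add: strict_partial_order_def irrefl_def)
  moreover have "total_on A (X \<union> Y)"
    using total by (auto simp: total_on_def)
  ultimately show ?thesis
    by (simp add: strict_linear_order_on_def)
qed

lemma regular_double_order_no_reversal_id:
  assumes "finite A" "\<sigma> permutes A" and reg: "regular_double_order A (X, Y)"
    and no_reversal_X: "\<And>a b. a \<in> A \<Longrightarrow> b \<in> A \<Longrightarrow> (a, b) \<in> X \<Longrightarrow> (\<sigma> b, \<sigma> a) \<notin> X"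
    and no_reversal_Y: "\<And>a b. a \<in> A \<Longrightarrow> b \<in> A \<Longrightarrow> (a, b) \<in> Y \<Longrightarrow> (\<sigma> b, \<sigma> a) \<notin> Y"
  shows "\<sigma> = id"
proof -
  obtain h :: "'a \<Rightarrow> nat" where level_X: "\<And>a b. a \<in> A \<Longrightarrow> b \<in> A \<Longrightarrow> (a, b) \<in> X \<longleftrightarrow> h a < h b"
    and level_Y: "\<And>a b. (a, b) \<in> Y \<Longrightarrow> h a = h b"
    using regular_double_orderE[OF reg] by blast
  have \<sigma>A: "\<sigma> a \<in> A" if "a \<in> A" for a
    using assms(2) that by (simp add: permutes_in_image)
  have "h (\<sigma> a) \<le> h (\<sigma> b)" if "a \<in> A" "b \<in> A" "h a < h b" for a b
    using no_reversal_X[of a b] level_X[of a b] level_X[of "\<sigma> b" "\<sigma> a"] that \<sigma>A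
    by (simp add: not_less[symmetric])
  then have level_\<sigma>: "h (\<sigma> a) = h a" if "a \<in> A" for a
    using permutes_preserves_monotone_levels[OF assms(1,2) _ that] by blast
  have "(\<sigma> b, \<sigma> a) \<notin> X \<union> Y" if "a \<in> A" "b \<in> A" "(a, b) \<in> X \<union> Y" for a b
    using no_reversal_X[of a b] no_reversal_Y[of a b] level_X[of a b] level_X[of "\<sigma> b" "\<sigma> a"]
      level_Y[of a b] level_Y[of "\<sigma> b" "\<sigma> a"] level_\<sigma> that \<sigma>A
    by auto
  with assms(1,2) regular_double_order_strict_linear_order[OF reg] show ?thesis
    by (rule permutes_strict_linear_order_no_reversal_id)
qed

theorem proposition4p5:
  fixes A :: "'a set" and d :: "'a rel \<times> 'a rel" and \<sigma> :: "'a \<Rightarrow> 'a"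
  assumes "finite A"
    and "regular_double_order A d"
    and "\<sigma> permutes A"
  shows "double_order A (double_union d (double_act A d \<sigma>)) \<longleftrightarrow> \<sigma> = id"
proof
  assume union: "double_order A (double_union d (double_act A d \<sigma>))"
  obtain X Y where d: "d = (X, Y)"
    by fastforce
  have irrefl_X: "irrefl (rel_union X (rel_act A X \<sigma>))"
    and irrefl_Y: "irrefl (rel_union Y (rel_act A Y \<sigma>))"
    using union by (simp_all add: d double_order_def strict_partial_order_def double_union_def double_act_def)
  show "\<sigma> = id"
    using assms(1,3) assms(2)[unfolded d]
    by (rule regular_double_order_no_reversal_id[OF _ _ _
        irrefl_rel_union_act_no_reversal[OF irrefl_X] irrefl_rel_union_act_no_reversal[OF irrefl_Y]])
next
  assume "\<sigma> = id"
  then show "double_order A (double_union d (double_act A d \<sigma>))"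
    using assms(2) by (simp add: double_union_double_act_id regular_double_order_def)
qed

end
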